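(* Let $\Omega=D(0,1)\cup D(1,1)$ and let $\alpha(z)$ be a function such that: $\alpha$ is of finite Mittag-Leffler type in $\Omega$; $\alpha$ is holomorphic in $D(0,1)$; and $\alpha$ has at $z=1$ a pole of order $\nu\ge0$. Then there exists an integer $m\ge1$ such that $(z-1)^\nu\alpha(z)$ has a multi-power series expansion around $1$ that converges absolutely and uniformly on $$\Omega_m=\{z\in\mathbb C:\ |z|<2^{1/m},\ |\operatorname{Arg}(z)|<\tfrac{\pi}{2m}\}.$$ In particular, the Taylor expansion of $\alpha$ around $0$ is a tame power series.
   Context: $D(a,r)$ denotes the open disk of center $a$ and radius $r$. A function $\alpha$ is of finite Mittag-Leffler type in an open set $U$ if there is a finite set $S\subset U$ such that $\alpha$ is holomorphic on $U\setminus S$ and for each $q\in S$ there is an entire function $\alpha_q$ such that $\alpha(z)-\alpha_q\big(1/(z-q)\big)$ has a removable singularity at $q$. (Here $z=1$ may belong to $S$; a pole of order $0$ means holomorphic at $1$.) For $N\ge1$ and $\mathbf e=(e_1,\dots,e_N)\in\mathbb Z_{>0}^N$ let $\lambda_{\mathbf e}(z)=(z^{e_1},\dots,z^{e_N})$. A multi-power series around $1$ is a series $\sum_{\mathbf i\in\mathbb Z_{\ge0}^N}c_{\mathbf i}(\lambda_{\mathbf e}(z)-\mathbf 1)^{\mathbf i}$, where $\mathbf 1=(1,\dots,1)$ and $\mathbf w^{\mathbf i}=\prod_j w_j^{i_j}$; convergence is meant in the usual sense for such multi-indexed series. A power series $\alpha(z)=\sum_{n\ge0}a_{n+1}z^n$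 is tame if (1) it converges on $D(0,1)$; (2) the function it represents extends holomorphically to a punctured neighborhood of $z=1$ with a pole of order $\nu\ge0$ at $z=1$; (3) on some open neighborhood of the interval $(0,1]$, $(z-1)^\nu\alpha(z)$ equals a multi-power series around $1$ converging absolutely and uniformly there. *)

theory Defs
  imports "HOL-Complex_Analysis.Complex_Analysis"
begin

definition finite_ML_type :: "(complex \<Rightarrow> complex) \<Rightarrow> complex set \<Rightarrow> bool" where
  "finite_ML_type \<alpha> U \<longleftrightarrow>
     (\<exists>S. finite S \<and> S \<subseteq> U \<and> \<alpha> holomorphic_on (U - S) \<and>
        (\<forall>q\<in>S. \<exists>\<alpha>q. \<alpha>q holomorphic_on UNIV \<and>
            (\<exists>l. ((\<lambda>z. \<alpha> z - \<alpha>q (1 / (z - q))) \<longlongrightarrow> l) (at q))))"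

definition pole_of_order :: "(complex \<Rightarrow> complex) \<Rightarrow> complex \<Rightarrow> nat \<Rightarrow> bool" where
  "pole_of_order f p \<nu> \<longleftrightarrow>
     (if \<nu> = 0 then (\<exists>r>0. f holomorphic_on ball p r)
      else (\<exists>r>0. \<exists>g. g holomorphic_on ball p r \<and> g p \<noteq> 0 \<and>
                 (\<forall>z\<in>ball p r - {p}. f z = g z / (z - p) ^ \<nu>)))"

(* multi-indices in Z_{>=0}^N, as functions vanishing from N on *)
definition multi_idx :: "nat \<Rightarrow> (nat \<Rightarrow> nat) set" where
  "multi_idx N = {i. \<forall>j\<ge>N. i j = 0}"

(* the term c_i (lambda_e(z) - 1)^i *)
definition mps_term :: "nat \<Rightarrow> (nat \<Rightarrow> nat) \<Rightarrow> ((nat \<Rightarrow> nat) \<Rightarrow> complex) \<Rightarrow> complex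
                        \<Rightarrow> (nat \<Rightarrow> nat) \<Rightarrow> complex" where
  "mps_term N e c z i = c i * (\<Prod>j<N. (z ^ e j - 1) ^ i j)"

definition multi_power_series_at_1 :: "complex set \<Rightarrow> (complex \<Rightarrow> complex) \<Rightarrow> bool" where
  "multi_power_series_at_1 U f \<longleftrightarrow>
     (\<exists>N e c. N \<ge> 1 \<and> (\<forall>j<N. e j > 0) \<and>
        (\<forall>z\<in>U. (\<lambda>i. norm (mps_term N e c z i)) summable_on multi_idx N \<and>
                 (mps_term N e c z has_sum f z) (multi_idx N)) \<and>
        uniform_limit U (\<lambda>F z. \<Sum>i\<in>F. mps_term N e c z i) f
            (finite_subsets_at_top (multi_idx N)) \<and>
        uniform_limit U (\<lambda>F z. \<Sum>i\<in>F. norm (mps_term N e c z i))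
            (\<lambda>z. infsum (\<lambda>i. norm (mps_term N e c z i)) (multi_idx N))
            (finite_subsets_at_top (multi_idx N)))"

(* tame power series; b n is the coefficient of z^n (i.e. b n = a_(n+1)) *)
definition tame :: "(nat \<Rightarrow> complex) \<Rightarrow> bool" where
  "tame b \<longleftrightarrow>
     (\<forall>z\<in>ball 0 1. summable (\<lambda>n. b n * z ^ n)) \<and>
     (\<exists>h r \<nu>. r > 0 \<and>
        (\<forall>z\<in>ball 0 1. h z = (\<Sum>n. b n * z ^ n)) \<and>
        h holomorphic_on (ball 1 r - {1}) \<and>
        pole_of_order h 1 \<nu> \<and>
        (\<exists>U f. open U \<and> U \<subseteq> ball 0 1 \<union> ball 1 r \<and>
               of_real ` {0<..1} \<subseteq> U \<and>
               multi_power_series_at_1 U f \<and>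
               (\<forall>z\<in>U - {1}. f z = (z - 1) ^ \<nu> * h z)))"

definition Omega_m :: "nat \<Rightarrow> complex set" where
  "Omega_m m = {z. z \<noteq> 0 \<and> norm z < 2 powr (1 / real m) \<and> \<bar>Arg z\<bar> < pi / (2 * real m)}"

end

theory Submission
  imports Defs
begin

text \<open>
  Write \<open>G z = (z - 1) ^ \<nu> * \<alpha> z\<close>; near \<open>1\<close> the pole is removed and the other singularities of
  \<alpha> stay away, so \<open>G\<close> is holomorphic on a lens \<open>ball 0 1 \<union> ball 1 d\<close>. A circle around \<open>1/2\<close>
  fits into the lens and encloses \<open>Omega_m m\<close> for large \<open>m\<close>, so \<open>G z\<close> is the Cauchy integral of
  \<open>G\<close> over this circle. Points \<open>z \<in> Omega_m m\<close> have small argument and modulus below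
  \<open>2 powr (1/m)\<close>, hence \<open>z ^ e\<close> stays close to \<open>1\<close> for a finite set of exponents \<open>e\<close>, whereas
  every point \<open>t\<close> of the circle has large argument or large modulus, so that \<open>t ^ e\<close> is far
  from \<open>1\<close> for one of these exponents. Cutting the circle into arcs accordingly, on each arc
  \<open>1 / (t - z) = (\<Sum>k<e. z ^ k * t ^ (e - 1 - k)) / (t ^ e - z ^ e)\<close> expands geometrically in
  \<open>(z ^ e - 1) / (t ^ e - 1)\<close> and binomially in \<open>z - 1\<close>, with geometrically dominated terms.
  The arcs together give a multi-power series in the variables \<open>z ^ e - 1\<close>, converging
  absolutely and uniformly on \<open>Omega_m m\<close>; tameness then holds with \<open>U = Omega_m m\<close>.
\<close>

section \<open>Infinite sums and multi-power series\<close>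

lemma has_sum_sum:
  fixes f :: "'i \<Rightarrow> 'a \<Rightarrow> 'b::topological_comm_monoid_add"
  assumes "finite L" "\<And>l. l \<in> L \<Longrightarrow> (f l has_sum s l) A"
  shows "((\<lambda>x. \<Sum>l\<in>L. f l x) has_sum (\<Sum>l\<in>L. s l)) A"
  using assms
proof (induction L rule: finite_induct)
  case (insert l L)
  then show ?case by (simp add: has_sum_add)
qed simp

lemma has_sum_lessThan_times_UNIV:
  fixes h :: "nat \<Rightarrow> 'i \<Rightarrow> 'b::topological_comm_monoid_add"
  assumes "\<And>i. i < e \<Longrightarrow> (h i has_sum s i) UNIV"
  shows "((\<lambda>(i, n). h i n) has_sum (\<Sum>i<e. s i)) ({..<e} \<times> UNIV)"
proof -
  have row: "((\<lambda>(i, n). h i n) has_sum s i) ({i} \<times> UNIV)" if "i < e" for i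
  proof -
    have "((\<lambda>(i, n). h i n) has_sum s i) (Pair i ` UNIV) \<longleftrightarrow>
          (((\<lambda>(i, n). h i n) \<circ> Pair i) has_sum s i) UNIV"
      by (rule has_sum_reindex) (simp add: inj_on_def)
    then have "((\<lambda>(i, n). h i n) has_sum s i) (Pair i ` UNIV)"
      using assms[OF that] by (simp add: comp_def)
    moreover have "Pair i ` UNIV = {i} \<times> UNIV" by auto
    ultimately show ?thesis by metis
  qed
  have "((\<lambda>(i, n). h i n) has_sum (\<Sum>i<e. s i)) (\<Union>i<e. {i} \<times> UNIV)"
    by (rule sum_has_sum) (use row in auto)
  moreover have "(\<Union>i<e. {i} \<times> UNIV) = {..<e} \<times> (UNIV :: 'i set)" by auto
  ultimately show ?thesis by simp
qed

lemma has_sum_lessThan_times_UNIV_sums: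
  fixes T :: "nat \<Rightarrow> nat \<Rightarrow> 'a::banach"
  assumes rows: "\<And>i. i < e \<Longrightarrow> summable (\<lambda>n. norm (T i n))"
    and sums: "(\<lambda>n. \<Sum>i<e. T i n) sums s"
  shows "((\<lambda>(i, n). T i n) has_sum s) ({..<e} \<times> UNIV)"
proof -
  have "summable (T i)" if "i < e" for i
    using rows[OF that] by (rule summable_norm_cancel)
  then have "(\<Sum>i<e. suminf (T i)) = s"
    using sums suminf_sum sums_unique by (metis lessThan_iff)
  moreover have "(T i has_sum suminf (T i)) UNIV" if "i < e" for i
    using rows[OF that] \<open>i < e \<Longrightarrow> summable (T i)\<close> that
    by (intro norm_summable_imp_has_sum) (auto intro: summable_sums)
  ultimately show ?thesis
    using has_sum_lessThan_times_UNIV[of e T "\<lambda>i. suminf (T i)"] by simp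
qed


lemma has_sum_geometric_scaled:
  fixes q :: real
  assumes "0 \<le> q" "q < 1"
  shows "((\<lambda>n. K * q ^ n) has_sum (K / (1 - q))) UNIV"
proof (rule norm_summable_imp_has_sum)
  show "summable (\<lambda>n. norm (K * q ^ n))"
    using assms by (simp add: abs_mult power_abs summable_mult summable_geometric)
  show "(\<lambda>n. K * q ^ n) sums (K / (1 - q))"
    using sums_mult[OF geometric_sums, of q K] assms by simp
qed


lemma multi_power_series_at_1I:
  assumes "N \<ge> 1" "\<And>j. j < N \<Longrightarrow> e j > 0"
    and has_sum: "\<And>z. z \<in> U \<Longrightarrow> (mps_term N e c z has_sum f z) (multi_idx N)"
    and bound: "\<And>z i. z \<in> U \<Longrightarrow> i \<in> multi_idx N \<Longrightarrow> norm (mps_term N e c z i) \<le> M i"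
    and "M summable_on multi_idx N"
  shows "multi_power_series_at_1 U f"
  unfolding multi_power_series_at_1_def
proof (intro exI conjI ballI)
  show "uniform_limit U (\<lambda>F z. \<Sum>i\<in>F. mps_term N e c z i) f (finite_subsets_at_top (multi_idx N))"
    by (rule Weierstrass_m_test_general'[OF bound has_sum \<open>M summable_on _\<close>])
  show "uniform_limit U (\<lambda>F z. \<Sum>i\<in>F. norm (mps_term N e c z i))
          (\<lambda>z. \<Sum>\<^sub>\<infinity>i\<in>multi_idx N. norm (mps_term N e c z i)) (finite_subsets_at_top (multi_idx N))"
    by (rule Weierstrass_m_test_general) (use bound \<open>M summable_on _\<close> in auto)
  show "(\<lambda>i. norm (mps_term N e c z i)) summable_on multi_idx N" if "z \<in> U" for z
    by (rule summable_on_comparison_test[OF \<open>M summable_on _\<close>]) (use bound that in auto)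
qed (use assms in auto)

lemma multi_power_series_at_1_cong:
  assumes "\<And>z. z \<in> U \<Longrightarrow> f z = g z"
  shows "multi_power_series_at_1 U f \<longleftrightarrow> multi_power_series_at_1 U g"
proof -
  have limit: "uniform_limit U F f X \<longleftrightarrow> uniform_limit U F g X" for F X
    using assms by (intro uniform_limit_cong') auto
  show ?thesis
    unfolding multi_power_series_at_1_def limit using assms by simp
qed

\<comment> \<open>The multi-power series has one pair of variables per arc: coordinate \<open>2 * l\<close> of a
  multi-index carries \<open>z - 1\<close> and coordinate \<open>2 * l + 1\<close> carries \<open>z ^ e\<^sub>l - 1\<close>.\<close>
definition block_extend :: "nat \<Rightarrow> nat \<Rightarrow> (nat \<times> nat \<Rightarrow> 'a::zero) \<Rightarrow> (nat \<Rightarrow> nat) \<Rightarrow> 'a" where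
  "block_extend l e \<phi> i =
     (if (\<forall>j. j \<noteq> 2*l \<and> j \<noteq> Suc (2*l) \<longrightarrow> i j = 0) \<and> i (2*l) < e
      then \<phi> (i (2*l), i (Suc (2*l))) else 0)"

lemma has_sum_block_extend:
  assumes "(\<phi> has_sum s) ({..<e} \<times> UNIV)" and "Suc (2*l) < N"
  shows "(block_extend l e \<phi> has_sum s) (multi_idx N)"
proof -
  define F where "F = (\<lambda>(a, n) j. if j = 2*l then a else if j = Suc (2*l) then n else (0::nat))"
  define D where "D = {..<e} \<times> (UNIV :: nat set)"
  have F_at: "F x (2*l) = fst x" "F x (Suc (2*l)) = snd x" for x
    unfolding F_def by (auto split: prod.splits)
  have F_supp: "F x j = 0" if "j \<noteq> 2*l" "j \<noteq> Suc (2*l)" for x j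
    using that unfolding F_def by (simp split: prod.splits)
  have "inj_on F D"
    by (rule inj_onI) (metis F_at prod.collapse)
  moreover have "(block_extend l e \<phi> \<circ> F) x = \<phi> x" if "x \<in> D" for x
    using that F_supp by (simp add: block_extend_def F_at D_def mem_Times_iff)
  then have "((block_extend l e \<phi> \<circ> F) has_sum s) D"
    using assms(1) unfolding D_def by (simp cong: has_sum_cong)
  ultimately have image: "(block_extend l e \<phi> has_sum s) (F ` D)"
    by (simp add: has_sum_reindex)
  have zero: "block_extend l e \<phi> i = 0" if "i \<notin> F ` D" for i
  proof (rule ccontr)
    assume "block_extend l e \<phi> i \<noteq> 0"
    then have supp: "\<forall>j. j \<noteq> 2*l \<and> j \<noteq> Suc (2*l) \<longrightarrow> i j = 0" "i (2*l) < e"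
      unfolding block_extend_def by (auto split: if_splits)
    then have "i = F (i (2*l), i (Suc (2*l)))"
      by (auto simp: F_def fun_eq_iff)
    with supp(2) that show False by (auto simp: D_def)
  qed
  have "F ` D \<subseteq> multi_idx N"
    using assms(2) by (auto simp: F_def multi_idx_def split: prod.splits)
  then have "(block_extend l e \<phi> has_sum s) (multi_idx N) \<longleftrightarrow> (block_extend l e \<phi> has_sum s) (F ` D)"
    using zero by (intro has_sum_cong_neutral) auto
  with image show ?thesis
    by simp
qed

lemma norm_block_extend_le:
  assumes "\<And>x. x \<in> {..<e} \<times> UNIV \<Longrightarrow> norm (\<phi> x) \<le> \<psi> x"
  shows "norm (block_extend l e \<phi> i) \<le> block_extend l e \<psi> i"
  unfolding block_extend_def using assms by auto

lemma mps_term_block_sum: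
  fixes c :: "nat \<Rightarrow> nat \<Rightarrow> nat \<Rightarrow> complex"
  shows "mps_term (2*P) (\<lambda>j. if even j then 1 else el (j div 2))
           (\<lambda>i. \<Sum>l<P. block_extend l (el l) (\<lambda>(a, n). c l a n) i) z i =
         (\<Sum>l<P. block_extend l (el l) (\<lambda>(a, n). c l a n * (z - 1) ^ a * (z ^ el l - 1) ^ n) i)"
proof -
  define ex where "ex j = (if even j then 1 else el (j div 2))" for j
  have "block_extend l (el l) (\<lambda>(a, n). c l a n) i * (\<Prod>j<2*P. (z ^ ex j - 1) ^ i j) =
        block_extend l (el l) (\<lambda>(a, n). c l a n * (z - 1) ^ a * (z ^ el l - 1) ^ n) i" if "l < P" for l
  proof (cases "(\<forall>j. j \<noteq> 2*l \<and> j \<noteq> Suc (2*l) \<longrightarrow> i j = 0) \<and> i (2*l) < el l")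
    case True
    then have "(\<Prod>j<2*P. (z ^ ex j - 1) ^ i j) = (\<Prod>j\<in>{2*l, Suc (2*l)}. (z ^ ex j - 1) ^ i j)"
      by (intro prod.mono_neutral_right) (use that in auto)
    then show ?thesis
      using True by (simp add: block_extend_def ex_def mult.assoc)
  next
    case False
    then show ?thesis
      unfolding block_extend_def if_not_P[OF False] by simp
  qed
  then show ?thesis
    unfolding mps_term_def ex_def[symmetric] sum_distrib_right by simp
qed

definition double_power_series_on ::
    "complex set \<Rightarrow> nat \<Rightarrow> (nat \<Rightarrow> nat \<Rightarrow> complex) \<Rightarrow> (complex \<Rightarrow> complex) \<Rightarrow> bool" where
  "double_power_series_on V e c h \<longleftrightarrow>
     (\<exists>K q. 0 \<le> q \<and> q < 1 \<and>
        (\<forall>z\<in>V. ((\<lambda>(i, n). c i n * (z - 1) ^ i * (z ^ e - 1) ^ n) has_sum h z) ({..<e} \<times> UNIV) \<and>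
               (\<forall>i n. norm (c i n * (z - 1) ^ i * (z ^ e - 1) ^ n) \<le> K * q ^ n)))"

lemma double_power_series_on_divide:
  assumes "double_power_series_on V e c h"
  shows "double_power_series_on V e (\<lambda>i n. c i n / w) (\<lambda>z. h z / w)"
proof -
  obtain K q where "0 \<le> q" "q < 1"
    and series: "\<And>z. z \<in> V \<Longrightarrow> ((\<lambda>(i, n). c i n * (z - 1) ^ i * (z ^ e - 1) ^ n) has_sum h z) ({..<e} \<times> UNIV)"
    and bound: "\<And>z i n. z \<in> V \<Longrightarrow> norm (c i n * (z - 1) ^ i * (z ^ e - 1) ^ n) \<le> K * q ^ n"
    using assms unfolding double_power_series_on_def by blast
  have "((\<lambda>(i, n). c i n / w * (z - 1) ^ i * (z ^ e - 1) ^ n) has_sum h z / w) ({..<e} \<times> UNIV)"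
    if "z \<in> V" for z
    using has_sum_divide_const[OF series[OF that], of w] by (simp add: case_prod_unfold field_simps)
  moreover have "norm (c i n / w * (z - 1) ^ i * (z ^ e - 1) ^ n) \<le> K / norm w * q ^ n"
    if "z \<in> V" for z i n
    using divide_right_mono[OF bound[OF that], of "norm w"]
    by (simp add: norm_mult norm_divide field_simps)
  ultimately show ?thesis
    unfolding double_power_series_on_def using \<open>0 \<le> q\<close> \<open>q < 1\<close> by blast
qed

lemma multi_power_series_at_1_block_sum:
  fixes c :: "nat \<Rightarrow> nat \<Rightarrow> nat \<Rightarrow> complex" and el :: "nat \<Rightarrow> nat"
  assumes "P > 0" and el_pos: "\<And>l. l < P \<Longrightarrow> el l > 0"
    and series: "\<And>l. l < P \<Longrightarrow> double_power_series_on V (el l) (c l) (h l)"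
  shows "multi_power_series_at_1 V (\<lambda>z. \<Sum>l<P. h l z)"
proof -
  define bounded_by where "bounded_by l K q \<longleftrightarrow> 0 \<le> q \<and> q < 1 \<and>
      (\<forall>z\<in>V. ((\<lambda>(i, n). c l i n * (z - 1) ^ i * (z ^ el l - 1) ^ n) has_sum h l z) ({..<el l} \<times> UNIV) \<and>
             (\<forall>i n. norm (c l i n * (z - 1) ^ i * (z ^ el l - 1) ^ n) \<le> K * q ^ n))" for l K q
  have "\<forall>l<P. \<exists>K q. bounded_by l K q"
    using series unfolding double_power_series_on_def bounded_by_def by blast
  then obtain K q where "\<And>l. l < P \<Longrightarrow> bounded_by l (K l) (q l)"
    by metis
  then have q: "\<And>l. l < P \<Longrightarrow> 0 \<le> q l \<and> q l < 1"
    and has_sum: "\<And>l z. l < P \<Longrightarrow> z \<in> V \<Longrightarrow>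
          ((\<lambda>(i, n). c l i n * (z - 1) ^ i * (z ^ el l - 1) ^ n) has_sum h l z) ({..<el l} \<times> UNIV)"
    and bound: "\<And>l z i n. l < P \<Longrightarrow> z \<in> V \<Longrightarrow>
          norm (c l i n * (z - 1) ^ i * (z ^ el l - 1) ^ n) \<le> K l * q l ^ n"
    unfolding bounded_by_def by blast+
  define B where "B l = (\<lambda>(i::nat, n). K l * q l ^ n)" for l
  have B_has_sum: "(B l has_sum (\<Sum>i<el l. K l / (1 - q l))) ({..<el l} \<times> UNIV)" if "l < P" for l
    unfolding B_def by (rule has_sum_lessThan_times_UNIV) (use has_sum_geometric_scaled q[OF that] in auto)
  show ?thesis
  proof (rule multi_power_series_at_1I)
    show "(mps_term (2*P) (\<lambda>j. if even j then 1 else el (j div 2))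
             (\<lambda>i. \<Sum>l<P. block_extend l (el l) (\<lambda>(a, n). c l a n) i) z has_sum (\<Sum>l<P. h l z))
            (multi_idx (2*P))" if "z \<in> V" for z
      unfolding mps_term_block_sum using has_sum that by (intro has_sum_sum has_sum_block_extend) auto
    show "(\<lambda>i. \<Sum>l<P. block_extend l (el l) (B l) i) summable_on multi_idx (2*P)"
      unfolding summable_on_def
      by (rule exI, rule has_sum_sum) (auto intro: has_sum_block_extend B_has_sum)
    show "norm (mps_term (2*P) (\<lambda>j. if even j then 1 else el (j div 2))
             (\<lambda>i. \<Sum>l<P. block_extend l (el l) (\<lambda>(a, n). c l a n) i) z i)
          \<le> (\<Sum>l<P. block_extend l (el l) (B l) i)" if "z \<in> V" for z i
      unfolding mps_term_block_sum using that
      by (intro order.trans[OF norm_sum] sum_mono norm_block_extend_le) (auto simp: B_def bound)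
  qed (use \<open>P > 0\<close> el_pos in auto)
qed

section \<open>Expansion of the Cauchy kernel along an arc\<close>

lemma sum_power_eq_sum_binomial_at_1:
  fixes z :: "'a::comm_ring_1"
  shows "(\<Sum>k<e. z ^ k * A k) = (\<Sum>i<e. (\<Sum>k<e. of_nat (k choose i) * A k) * (z - 1) ^ i)"
proof -
  have "z ^ k = (\<Sum>i<e. of_nat (k choose i) * (z - 1) ^ i)" if "k < e" for k
  proof -
    have "z ^ k = (\<Sum>i\<le>k. of_nat (k choose i) * (z - 1) ^ i)"
      using binomial_ring[of "z - 1" 1 k] by simp
    also have "\<dots> = (\<Sum>i<e. of_nat (k choose i) * (z - 1) ^ i)"
      by (rule sum.mono_neutral_left) (use that in \<open>auto simp: binomial_eq_0 not_le\<close>)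
    finally show ?thesis .
  qed
  then have "(\<Sum>k<e. z ^ k * A k) = (\<Sum>k<e. \<Sum>i<e. of_nat (k choose i) * (z - 1) ^ i * A k)"
    by (simp add: sum_distrib_right)
  also have "\<dots> = (\<Sum>i<e. (\<Sum>k<e. of_nat (k choose i) * A k) * (z - 1) ^ i)"
    by (subst sum.swap) (simp add: sum_distrib_left sum_distrib_right mult_ac)
  finally show ?thesis .
qed

lemma inverse_diff_eq_sum_div_power_diff:
  fixes t z :: "'a::field"
  assumes "t ^ e \<noteq> z ^ e"
  shows "1 / (t - z) = (\<Sum>k<e. z ^ k * t ^ (e - 1 - k)) / (t ^ e - z ^ e)"
proof -
  have "(\<Sum>i<e. z ^ (e - Suc i) * t ^ i) = (\<Sum>k<e. z ^ k * t ^ (e - 1 - k))"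
    by (rule sum.reindex_bij_witness[where i="\<lambda>k. e - 1 - k" and j="\<lambda>i. e - 1 - i"]) auto
  then have factor: "t ^ e - z ^ e = (t - z) * (\<Sum>k<e. z ^ k * t ^ (e - 1 - k))"
    by (simp add: power_diff_sumr2)
  with assms have "t - z \<noteq> 0" "(\<Sum>k<e. z ^ k * t ^ (e - 1 - k)) \<noteq> 0"
    by auto
  then show ?thesis
    unfolding factor by simp
qed

lemma contour_integral_sums_part_circlepath:
  assumes "uniform_limit (path_image (part_circlepath c r a b)) (\<lambda>N w. \<Sum>n<N. f n w) g sequentially"
    and cont: "\<And>n. continuous_on (path_image (part_circlepath c r a b)) (f n)"
  shows "(\<lambda>n. contour_integral (part_circlepath c r a b) (f n)) sums
           contour_integral (part_circlepath c r a b) g"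
proof -
  let ?\<gamma> = "part_circlepath c r a b"
  have int: "f n contour_integrable_on ?\<gamma>" for n
    using cont by (rule contour_integrable_continuous_part_circlepath)
  have "((\<lambda>N. contour_integral ?\<gamma> (\<lambda>w. \<Sum>n<N. f n w)) \<longlongrightarrow> contour_integral ?\<gamma> g) sequentially"
  proof (rule contour_integral_uniform_limit(2)[OF _ assms(1)])
    show "norm (vector_derivative ?\<gamma> (at t)) \<le> \<bar>r\<bar> * norm (of_real b - of_real a :: complex)" for t
      by (simp add: vector_derivative_part_circlepath norm_mult)
  qed (auto intro!: always_eventually contour_integrable_sum int)
  moreover have "contour_integral ?\<gamma> (\<lambda>w. \<Sum>n<N. f n w) = (\<Sum>n<N. contour_integral ?\<gamma> (f n))" for N
    by (rule contour_integral_sum) (auto simp: int)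
  ultimately show ?thesis
    unfolding sums_def by simp
qed

lemma sums_divide_power_geometric:
  fixes D v h :: "'a::real_normed_field"
  assumes "norm v < norm D"
  shows "(\<lambda>n. h / D ^ Suc n * v ^ n) sums (h / (D - v))"
proof -
  have "D \<noteq> 0" "D - v \<noteq> 0"
    using assms by auto
  have "norm (v / D) < 1"
    using assms \<open>D \<noteq> 0\<close> by (simp add: norm_divide divide_less_eq)
  then have "(\<lambda>n. h / D * (v / D) ^ n) sums (h / D * (1 / (1 - v / D)))"
    by (intro sums_mult geometric_sums)
  moreover have "h / D * (1 / (1 - v / D)) = h / (D - v)"
    using \<open>D \<noteq> 0\<close> \<open>D - v \<noteq> 0\<close> by (simp add: field_simps)
  ultimately show ?thesis
    using \<open>D \<noteq> 0\<close> by (simp add: power_divide field_simps)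
qed

lemma contour_integral_geometric_series_part_circlepath:
  fixes H D :: "complex \<Rightarrow> complex" and c :: complex and r a b :: real
  defines "\<gamma> \<equiv> part_circlepath c r a b"
  assumes H: "continuous_on (path_image \<gamma>) H" and D: "continuous_on (path_image \<gamma>) D"
    and far: "\<And>t. t \<in> path_image \<gamma> \<Longrightarrow> \<rho> \<le> norm (D t)" and v: "norm v < \<rho>"
  shows "(\<lambda>n. contour_integral \<gamma> (\<lambda>t. H t / D t ^ Suc n) * v ^ n) sums
           contour_integral \<gamma> (\<lambda>t. H t / (D t - v))"
proof -
  have \<rho>: "\<rho> > 0"
    using v norm_ge_zero[of v] by linarith
  have D0: "D t \<noteq> 0" if "t \<in> path_image \<gamma>" for t
    using far[OF that] \<rho> by auto
  obtain MH where MH: "\<And>t. t \<in> path_image \<gamma> \<Longrightarrow> norm (H t) \<le> MH"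
    using compact_imp_bounded[OF compact_continuous_image[OF H]] unfolding bounded_iff
    by (auto simp: \<gamma>_def compact_path_image)
  define f where "f n t = H t / D t ^ Suc n * v ^ n" for n t
  have f_bound: "norm (f n t) \<le> MH / \<rho> * (norm v / \<rho>) ^ n" if t: "t \<in> path_image \<gamma>" for n t
  proof -
    have "norm (f n t) = norm (H t) / norm (D t) ^ Suc n * norm v ^ n"
      by (simp add: f_def norm_mult norm_divide norm_power)
    also have "\<dots> \<le> MH / \<rho> ^ Suc n * norm v ^ n"
      using MH[OF t] far[OF t] \<rho> order_trans[OF norm_ge_zero MH[OF t]]
      by (intro mult_right_mono frac_le power_mono) auto
    also have "\<dots> = MH / \<rho> * (norm v / \<rho>) ^ n"
      by (simp add: power_divide)
    finally show ?thesis .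
  qed
  have f_sums: "(\<lambda>n. f n t) sums (H t / (D t - v))" if t: "t \<in> path_image \<gamma>" for t
    unfolding f_def using far[OF t] v by (intro sums_divide_power_geometric) simp
  have "summable (\<lambda>n. MH / \<rho> * (norm v / \<rho>) ^ n)"
    using v \<rho> by (intro summable_mult summable_geometric) auto
  then have "uniform_limit (path_image \<gamma>) (\<lambda>N t. \<Sum>n<N. f n t) (\<lambda>t. \<Sum>n. f n t) sequentially"
    using f_bound by (rule Weierstrass_m_test[rotated])
  moreover have "(\<Sum>n. f n t) = H t / (D t - v)" if "t \<in> path_image \<gamma>" for t
    using f_sums[OF that] by (rule sums_unique[symmetric])
  ultimately have "uniform_limit (path_image \<gamma>) (\<lambda>N t. \<Sum>n<N. f n t) (\<lambda>t. H t / (D t - v)) sequentially"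
    using uniform_limit_cong'[of "path_image \<gamma>" "\<lambda>N t. \<Sum>n<N. f n t" "\<lambda>N t. \<Sum>n<N. f n t"
        "\<lambda>t. \<Sum>n. f n t" "\<lambda>t. H t / (D t - v)"] by simp
  moreover have "continuous_on (path_image \<gamma>) (f n)" for n
    unfolding f_def using H D D0 by (intro continuous_intros) auto
  ultimately have "(\<lambda>n. contour_integral \<gamma> (f n)) sums contour_integral \<gamma> (\<lambda>t. H t / (D t - v))"
    unfolding \<gamma>_def by (rule contour_integral_sums_part_circlepath)
  moreover have "contour_integral \<gamma> (f n) = contour_integral \<gamma> (\<lambda>t. H t / D t ^ Suc n) * v ^ n" for n
    unfolding f_def \<gamma>_def using H D D0
    by (intro contour_integral_rmul contour_integrable_continuous_part_circlepath continuous_intros)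
       (auto simp: \<gamma>_def)
  ultimately show ?thesis
    by simp
qed

lemma contour_integral_cauchy_kernel_split_part_circlepath:
  fixes G :: "complex \<Rightarrow> complex" and c :: complex and r a b :: real
  defines "\<gamma> \<equiv> part_circlepath c r a b"
  assumes G: "continuous_on (path_image \<gamma>) G"
    and sep: "\<And>t. t \<in> path_image \<gamma> \<Longrightarrow> t ^ e \<noteq> z ^ e"
  shows "contour_integral \<gamma> (\<lambda>t. G t / (t - z)) =
           (\<Sum>k<e. z ^ k * contour_integral \<gamma> (\<lambda>t. G t * t ^ (e - 1 - k) / (t ^ e - z ^ e)))"
proof -
  define I where "I k = (\<lambda>t. G t * t ^ (e - 1 - k) / (t ^ e - z ^ e))" for k
  have int: "I k contour_integrable_on \<gamma>" for k
    unfolding \<gamma>_def I_def using G sep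
    by (intro contour_integrable_continuous_part_circlepath continuous_intros) (auto simp: \<gamma>_def)
  have "contour_integral \<gamma> (\<lambda>t. G t / (t - z)) = contour_integral \<gamma> (\<lambda>t. \<Sum>k<e. z ^ k * I k t)"
  proof (rule contour_integral_eq)
    fix t assume "t \<in> path_image \<gamma>"
    then have "G t / (t - z) = G t * ((\<Sum>k<e. z ^ k * t ^ (e - 1 - k)) / (t ^ e - z ^ e))"
      using inverse_diff_eq_sum_div_power_diff[OF sep] by (metis times_divide_eq_right mult_1_right)
    then show "G t / (t - z) = (\<Sum>k<e. z ^ k * I k t)"
      by (simp add: I_def sum_distrib_left sum_divide_distrib algebra_simps)
  qed
  also have "\<dots> = (\<Sum>k<e. contour_integral \<gamma> (\<lambda>t. z ^ k * I k t))"
    by (rule contour_integral_sum) (auto intro: contour_integrable_lmul int)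
  also have "\<dots> = (\<Sum>k<e. z ^ k * contour_integral \<gamma> (I k))"
    by (simp add: contour_integral_lmul int)
  finally show ?thesis
    unfolding I_def .
qed

\<comment> \<open>The coefficient of \<open>(z - 1) ^ i * (z ^ e - 1) ^ n\<close> in \<open>\<integral>\<^sub>\<gamma> G t / (t - z) dt\<close>: split the
  Cauchy kernel as in the previous lemma, expand \<open>1 / (t ^ e - z ^ e)\<close> geometrically in
  \<open>(z ^ e - 1) / (t ^ e - 1)\<close> and \<open>z ^ k\<close> binomially around \<open>1\<close>.\<close>
definition cauchy_coeff :: "(real \<Rightarrow> complex) \<Rightarrow> (complex \<Rightarrow> complex) \<Rightarrow> nat \<Rightarrow> nat \<Rightarrow> nat \<Rightarrow> complex" where
  "cauchy_coeff \<gamma> G e i n =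
     (\<Sum>k<e. of_nat (k choose i) * contour_integral \<gamma> (\<lambda>t. G t * t ^ (e - 1 - k) / (t ^ e - 1) ^ Suc n))"

lemma part_circlepath_kernel_integral_bound:
  fixes G :: "complex \<Rightarrow> complex" and c :: complex and r a b \<rho> :: real
  defines "\<gamma> \<equiv> part_circlepath c r a b"
  assumes G: "continuous_on (path_image \<gamma>) G" and "0 < r" "a \<le> b" "0 < \<rho>"
    and far: "\<And>t. t \<in> path_image \<gamma> \<Longrightarrow> \<rho> \<le> norm (t ^ e - 1)"
  obtains M where "M \<ge> 0"
    "\<And>k n. norm (contour_integral \<gamma> (\<lambda>t. G t * t ^ (e - 1 - k) / (t ^ e - 1) ^ Suc n)) \<le> M / \<rho> ^ n"
proof -
  have "continuous_on (path_image \<gamma>) (\<lambda>t. norm (G t) * max 1 (norm t) ^ e)"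
    using G by (intro continuous_intros)
  then have "bounded ((\<lambda>t. norm (G t) * max 1 (norm t) ^ e) ` path_image \<gamma>)"
    by (intro compact_imp_bounded compact_continuous_image) (simp_all add: \<gamma>_def compact_path_image)
  then obtain B where "B > 0" and B: "\<And>t. t \<in> path_image \<gamma> \<Longrightarrow> norm (G t) * max 1 (norm t) ^ e \<le> B"
    unfolding bounded_pos by fastforce
  have integrand: "norm (G t * t ^ (e - 1 - k) / (t ^ e - 1) ^ Suc n) \<le> B / \<rho> ^ Suc n"
    if t: "t \<in> path_image \<gamma>" for t k n
  proof -
    have "norm (G t * t ^ (e - 1 - k)) \<le> norm (G t) * max 1 (norm t) ^ e"
      unfolding norm_mult norm_power
      by (intro mult_left_mono order.trans[OF power_mono power_increasing]) auto
    then show ?thesis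
      unfolding norm_divide norm_power using B[OF t] far[OF t] \<open>0 < \<rho>\<close> \<open>B > 0\<close>
      by (intro frac_le power_mono) (auto simp del: power_Suc)
  qed
  have bound: "norm (contour_integral \<gamma> (\<lambda>t. G t * t ^ (e - 1 - k) / (t ^ e - 1) ^ Suc n))
          \<le> B * r * (b - a) / \<rho> / \<rho> ^ n" for k n
  proof -
    have "t ^ e - 1 \<noteq> 0" if "t \<in> path_image \<gamma>" for t
      using far[OF that] \<open>0 < \<rho>\<close> by auto
    then have "continuous_on (path_image \<gamma>) (\<lambda>t. G t * t ^ (e - 1 - k) / (t ^ e - 1) ^ Suc n)"
      using G by (intro continuous_intros) auto
    then have "((\<lambda>t. G t * t ^ (e - 1 - k) / (t ^ e - 1) ^ Suc n) has_contour_integral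
                contour_integral \<gamma> (\<lambda>t. G t * t ^ (e - 1 - k) / (t ^ e - 1) ^ Suc n)) \<gamma>"
      unfolding \<gamma>_def by (intro has_contour_integral_integral contour_integrable_continuous_part_circlepath)
    then have "norm (contour_integral \<gamma> (\<lambda>t. G t * t ^ (e - 1 - k) / (t ^ e - 1) ^ Suc n))
                 \<le> B / \<rho> ^ Suc n * r * (b - a)"
      unfolding \<gamma>_def
      by (rule has_contour_integral_bound_part_circlepath)
         (use integrand \<open>B > 0\<close> \<open>0 < \<rho>\<close> \<open>0 < r\<close> \<open>a \<le> b\<close> in \<open>auto simp: \<gamma>_def\<close>)
    then show ?thesis
      by (simp add: field_simps)
  qed
  have "B * r * (b - a) / \<rho> \<ge> 0"
    using \<open>B > 0\<close> \<open>0 < r\<close> \<open>a \<le> b\<close> \<open>0 < \<rho>\<close> by simp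
  from this bound show ?thesis
    by (rule that)
qed

lemma part_circlepath_cauchy_coeff_bound:
  fixes G :: "complex \<Rightarrow> complex" and c :: complex and r a b \<rho> :: real
  defines "\<gamma> \<equiv> part_circlepath c r a b"
  assumes "continuous_on (path_image \<gamma>) G" "0 < r" "a \<le> b" "0 < \<rho>"
    and "\<And>t. t \<in> path_image \<gamma> \<Longrightarrow> \<rho> \<le> norm (t ^ e - 1)"
  obtains K where "K \<ge> 0" "\<And>i n. norm (cauchy_coeff \<gamma> G e i n) \<le> K / \<rho> ^ n"
proof -
  obtain M where "M \<ge> 0"
    and M: "\<And>k n. norm (contour_integral \<gamma> (\<lambda>t. G t * t ^ (e - 1 - k) / (t ^ e - 1) ^ Suc n)) \<le> M / \<rho> ^ n"
    unfolding \<gamma>_def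
    by (rule part_circlepath_kernel_integral_bound[where \<rho>=\<rho> and e=e]) (use assms(2-6) in \<open>auto simp: \<gamma>_def\<close>)
  have bound: "norm (cauchy_coeff \<gamma> G e i n) \<le> (\<Sum>k<e. 2 ^ k * M) / \<rho> ^ n" for i n
  proof -
    have "norm (cauchy_coeff \<gamma> G e i n) \<le> (\<Sum>k<e. 2 ^ k * (M / \<rho> ^ n))"
      unfolding cauchy_coeff_def
    proof (rule order.trans[OF norm_sum sum_mono])
      fix k
      have "real (k choose i) \<le> 2 ^ k"
        by (metis binomial_le_pow2 of_nat_le_iff of_nat_numeral of_nat_power)
      then show "norm (of_nat (k choose i) * contour_integral \<gamma>
                   (\<lambda>t. G t * t ^ (e - 1 - k) / (t ^ e - 1) ^ Suc n)) \<le> 2 ^ k * (M / \<rho> ^ n)"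
        unfolding norm_mult by (intro mult_mono M) auto
    qed
    then show ?thesis
      by (simp add: sum_divide_distrib)
  qed
  have "(\<Sum>k<e. 2 ^ k * M) \<ge> 0"
    using \<open>M \<ge> 0\<close> by (intro sum_nonneg) auto
  from this bound show ?thesis
    by (rule that)
qed

lemma has_sum_cauchy_coeff_part_circlepath:
  fixes G :: "complex \<Rightarrow> complex" and c :: complex and r a b \<rho> :: real
  defines "\<gamma> \<equiv> part_circlepath c r a b"
  assumes G: "continuous_on (path_image \<gamma>) G" and "0 < r" "a \<le> b"
    and far: "\<And>t. t \<in> path_image \<gamma> \<Longrightarrow> \<rho> \<le> norm (t ^ e - 1)" and z: "norm (z ^ e - 1) < \<rho>"
  shows "((\<lambda>(i, n). cauchy_coeff \<gamma> G e i n * (z - 1) ^ i * (z ^ e - 1) ^ n) has_sum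
           contour_integral \<gamma> (\<lambda>t. G t / (t - z))) ({..<e} \<times> UNIV)"
proof (rule has_sum_lessThan_times_UNIV_sums)
  define v where "v = z ^ e - 1"
  define I where "I k n = contour_integral \<gamma> (\<lambda>t. G t * t ^ (e - 1 - k) / (t ^ e - 1) ^ Suc n)" for k n
  have "0 < \<rho>"
    using z norm_ge_zero[of "z ^ e - 1"] by linarith
  obtain K where "K \<ge> 0" and K: "\<And>i n. norm (cauchy_coeff \<gamma> G e i n) \<le> K / \<rho> ^ n"
    unfolding \<gamma>_def
    by (rule part_circlepath_cauchy_coeff_bound[where \<rho>=\<rho> and e=e]) (use G far \<open>0 < r\<close> \<open>a \<le> b\<close> \<open>0 < \<rho>\<close> in \<open>auto simp: \<gamma>_def\<close>)
  show "summable (\<lambda>n. norm (cauchy_coeff \<gamma> G e i n * (z - 1) ^ i * (z ^ e - 1) ^ n))" for i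
  proof (rule summable_comparison_test')
    show "summable (\<lambda>n. K * norm (z - 1) ^ i * (norm v / \<rho>) ^ n)"
      using z \<open>0 < \<rho>\<close> by (intro summable_mult summable_geometric) (simp add: v_def)
    show "norm (norm (cauchy_coeff \<gamma> G e i n * (z - 1) ^ i * (z ^ e - 1) ^ n))
            \<le> K * norm (z - 1) ^ i * (norm v / \<rho>) ^ n" for n
      using mult_right_mono[OF K[of i n], of "norm (z - 1) ^ i * norm v ^ n"]
      by (simp add: v_def norm_mult norm_power power_divide field_simps)
  qed
  have row: "(\<lambda>n. I k n * v ^ n) sums contour_integral \<gamma> (\<lambda>t. G t * t ^ (e - 1 - k) / (t ^ e - z ^ e))"
    for k
  proof -
    have "(\<lambda>n. I k n * v ^ n) sums contour_integral \<gamma> (\<lambda>t. G t * t ^ (e - 1 - k) / (t ^ e - 1 - v))"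
      unfolding I_def \<gamma>_def using G far z
      by (intro contour_integral_geometric_series_part_circlepath continuous_intros)
         (auto simp: \<gamma>_def v_def)
    then show ?thesis
      by (simp add: v_def)
  qed
  have sep: "t ^ e \<noteq> z ^ e" if "t \<in> path_image \<gamma>" for t
    using far[OF that] z by auto
  have "contour_integral \<gamma> (\<lambda>t. G t / (t - z)) =
        (\<Sum>k<e. z ^ k * contour_integral \<gamma> (\<lambda>t. G t * t ^ (e - 1 - k) / (t ^ e - z ^ e)))"
    unfolding \<gamma>_def
    by (rule contour_integral_cauchy_kernel_split_part_circlepath) (use G sep in \<open>auto simp: \<gamma>_def\<close>)
  then have "(\<lambda>n. \<Sum>k<e. z ^ k * (I k n * v ^ n)) sums contour_integral \<gamma> (\<lambda>t. G t / (t - z))"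
    by (simp only:) (intro sums_sum sums_mult row)
  moreover have "(\<Sum>k<e. z ^ k * (I k n * v ^ n)) =
                 (\<Sum>i<e. cauchy_coeff \<gamma> G e i n * (z - 1) ^ i * (z ^ e - 1) ^ n)" for n
    unfolding sum_power_eq_sum_binomial_at_1
    by (simp add: cauchy_coeff_def I_def v_def sum_distrib_left sum_distrib_right mult_ac)
  ultimately show "(\<lambda>n. \<Sum>i<e. cauchy_coeff \<gamma> G e i n * (z - 1) ^ i * (z ^ e - 1) ^ n) sums
                     contour_integral \<gamma> (\<lambda>t. G t / (t - z))"
    by simp
qed

lemma double_power_series_on_part_circlepath:
  fixes G :: "complex \<Rightarrow> complex" and c :: complex and r a b \<sigma> :: real
  defines "\<gamma> \<equiv> part_circlepath c r a b"
  assumes G: "continuous_on (path_image \<gamma>) G" and "0 < r" "a \<le> b" "0 \<le> \<sigma>"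
    and far: "\<And>t. t \<in> path_image \<gamma> \<Longrightarrow> \<sigma> < norm (t ^ e - 1)"
    and near: "\<And>z. z \<in> V \<Longrightarrow> norm (z - 1) \<le> 1 \<and> norm (z ^ e - 1) \<le> \<sigma>"
  shows "double_power_series_on V e (cauchy_coeff \<gamma> G e) (\<lambda>z. contour_integral \<gamma> (\<lambda>t. G t / (t - z)))"
proof -
  have "compact (path_image \<gamma>)" "path_image \<gamma> \<noteq> {}"
    by (simp_all add: \<gamma>_def compact_path_image)
  moreover have "continuous_on (path_image \<gamma>) (\<lambda>t. norm (t ^ e - 1))"
    by (intro continuous_intros)
  ultimately obtain t0 where t0: "t0 \<in> path_image \<gamma>"
    and t0_min: "\<And>t. t \<in> path_image \<gamma> \<Longrightarrow> norm (t0 ^ e - 1) \<le> norm (t ^ e - 1)"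
    by (metis continuous_attains_inf)
  define \<rho> where "\<rho> = norm (t0 ^ e - 1)"
  have "\<sigma> < \<rho>"
    using far[OF t0] by (simp add: \<rho>_def)
  then have "0 < \<rho>"
    using \<open>0 \<le> \<sigma>\<close> by linarith
  have far_\<rho>: "\<rho> \<le> norm (t ^ e - 1)" if "t \<in> path_image \<gamma>" for t
    using t0_min[OF that] by (simp add: \<rho>_def)
  obtain K where "K \<ge> 0" and K: "\<And>i n. norm (cauchy_coeff \<gamma> G e i n) \<le> K / \<rho> ^ n"
    unfolding \<gamma>_def
    by (rule part_circlepath_cauchy_coeff_bound[where \<rho>=\<rho> and e=e]) (use G far_\<rho> \<open>0 < r\<close> \<open>a \<le> b\<close> \<open>0 < \<rho>\<close> in \<open>auto simp: \<gamma>_def\<close>)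
  have "norm (cauchy_coeff \<gamma> G e i n * (z - 1) ^ i * (z ^ e - 1) ^ n) \<le> K * (\<sigma> / \<rho>) ^ n"
    if "z \<in> V" for z i n
  proof -
    have "norm (cauchy_coeff \<gamma> G e i n * (z - 1) ^ i * (z ^ e - 1) ^ n) \<le> K / \<rho> ^ n * 1 * \<sigma> ^ n"
      unfolding norm_mult norm_power using near[OF that] \<open>K \<ge> 0\<close> \<open>0 < \<rho>\<close>
      by (intro mult_mono K power_le_one power_mono) auto
    then show ?thesis
      by (simp add: power_divide)
  qed
  moreover have "((\<lambda>(i, n). cauchy_coeff \<gamma> G e i n * (z - 1) ^ i * (z ^ e - 1) ^ n) has_sum
                    contour_integral \<gamma> (\<lambda>t. G t / (t - z))) ({..<e} \<times> UNIV)" if "z \<in> V" for z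
    unfolding \<gamma>_def using G far_\<rho> near[OF that] \<open>\<sigma> < \<rho>\<close> \<open>0 < r\<close> \<open>a \<le> b\<close>
    by (intro has_sum_cauchy_coeff_part_circlepath) (auto simp: \<gamma>_def)
  moreover have "0 \<le> \<sigma> / \<rho>" "\<sigma> / \<rho> < 1"
    using \<open>0 \<le> \<sigma>\<close> \<open>\<sigma> < \<rho>\<close> \<open>0 < \<rho>\<close> by simp_all
  ultimately show ?thesis
    unfolding double_power_series_on_def by blast
qed

section \<open>Cauchy integrals over a circle cut into arcs\<close>

lemma has_contour_integral_part_circlepath_join:
  assumes "a < b" "b < d"
    and "(f has_contour_integral i) (part_circlepath c r a b)"
    and "(f has_contour_integral j) (part_circlepath c r b d)"
  shows "(f has_contour_integral (i + j)) (part_circlepath c r a d)"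
proof -
  have "((\<lambda>t. f (c + r * cis t) * r * \<i> * cis t) has_integral i) {a..b}"
       "((\<lambda>t. f (c + r * cis t) * r * \<i> * cis t) has_integral j) {b..d}"
    using assms by (simp_all add: has_contour_integral_part_circlepath_iff)
  then have "((\<lambda>t. f (c + r * cis t) * r * \<i> * cis t) has_integral (i + j)) {a..d}"
    by (rule has_integral_combine[rotated 2]) (use assms in auto)
  then show ?thesis
    using assms by (simp add: has_contour_integral_part_circlepath_iff)
qed

lemma has_contour_integral_part_circlepath_sum:
  fixes s :: "nat \<Rightarrow> real"
  assumes mono: "\<And>l. s l < s (Suc l)"
    and int: "\<And>l. f contour_integrable_on part_circlepath c r (s l) (s (Suc l))"
  shows "(f has_contour_integral (\<Sum>l<Suc L. contour_integral (part_circlepath c r (s l) (s (Suc l))) f))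
           (part_circlepath c r (s 0) (s (Suc L)))"
proof (induction L)
  case 0
  then show ?case
    using has_contour_integral_integral[OF int] by simp
next
  case (Suc L)
  have "s 0 < s (Suc L)"
    using mono by (induction L) (auto intro: less_trans)
  then show ?case
    using has_contour_integral_part_circlepath_join[OF _ mono Suc has_contour_integral_integral[OF int]]
    by simp
qed

lemma circlepath_partition_subordinate:
  fixes U :: "'i \<Rightarrow> complex set"
  assumes "\<And>i. i \<in> I \<Longrightarrow> open (U i)" and cover: "sphere c r \<subseteq> (\<Union>i\<in>I. U i)" and "0 < r"
  obtains P idx where "(P::nat) > 0"
    "\<And>l. l < P \<Longrightarrow> idx l \<in> I \<and>
       path_image (part_circlepath c r (2*pi*l/P) (2*pi*Suc l/P)) \<subseteq> U (idx l)"
proof -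
  define \<gamma> where "\<gamma> s = c + r * cis s" for s
  define V where "V i = \<gamma> -` U i" for i
  have open_V: "open (V i)" if "i \<in> I" for i
    using assms(1)[OF that] unfolding V_def \<gamma>_def by (intro open_vimage continuous_intros)
  have "\<gamma> s \<in> sphere c r" for s
    using \<open>0 < r\<close> by (simp add: \<gamma>_def dist_norm norm_mult)
  then have covered: "{0..2*pi} \<subseteq> \<Union>(V ` I)"
    using cover unfolding V_def by blast
  obtain \<delta> where "\<delta> > 0" and \<delta>: "\<And>x. x \<in> {0..2*pi} \<Longrightarrow> \<exists>G\<in>V ` I. ball x \<delta> \<subseteq> G"
    using Heine_Borel_lemma[OF compact_Icc covered] open_V by blast
  obtain P :: nat where P: "2*pi/\<delta> < P"
    using reals_Archimedean2 by blast
  moreover have "0 < 2*pi/\<delta>"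
    using \<open>\<delta> > 0\<close> by simp
  ultimately have "P > 0"
    by simp
  have step: "2*pi/P < \<delta>"
    using P \<open>\<delta> > 0\<close> \<open>P > 0\<close> by (simp add: field_simps)
  have "\<exists>i. i \<in> I \<and> path_image (part_circlepath c r (2*pi*l/P) (2*pi*Suc l/P)) \<subseteq> U i"
    if "l < P" for l
  proof -
    have "real l \<le> real P"
      using that by simp
    then have "2*pi*l/P \<in> {0..2*pi}"
      using \<open>P > 0\<close> by (auto simp: divide_simps)
    then obtain i where "i \<in> I" and i: "ball (2*pi*l/P) \<delta> \<subseteq> \<gamma> -` U i"
      using \<delta> unfolding V_def by fast
    have width: "2*pi*Suc l/P - 2*pi*l/P = 2*pi/P"
      by (simp add: diff_divide_distrib[symmetric] algebra_simps)
    then have "{2*pi*l/P .. 2*pi*Suc l/P} \<subseteq> ball (2*pi*l/P) \<delta>"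
      using step by (auto simp: dist_real_def)
    moreover have arc: "path_image (part_circlepath c r (2*pi*l/P) (2*pi*Suc l/P)) =
                   \<gamma> ` {2*pi*l/P .. 2*pi*Suc l/P}"
      unfolding path_image_part_circlepath' \<gamma>_def closed_segment_eq_real_ivl
      using width pi_gt_zero by (simp add: divide_right_mono)
    ultimately have "path_image (part_circlepath c r (2*pi*l/P) (2*pi*Suc l/P)) \<subseteq> U i"
      using i by auto
    with \<open>i \<in> I\<close> show ?thesis
      by blast
  qed
  then have "\<forall>l\<in>{..<P}. \<exists>i. i \<in> I \<and> path_image (part_circlepath c r (2*pi*l/P) (2*pi*Suc l/P)) \<subseteq> U i"
    by blast
  from bchoice[OF this] obtain idx
    where "\<forall>l\<in>{..<P}. idx l \<in> I \<and> path_image (part_circlepath c r (2*pi*l/P) (2*pi*Suc l/P)) \<subseteq> U (idx l)"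
    by blast
  with that[OF \<open>P > 0\<close>] show ?thesis
    by blast
qed

lemma Cauchy_integral_circlepath_sum_arcs:
  assumes "continuous_on (cball c r) f" "f holomorphic_on ball c r" "w \<in> ball c r" "(P::nat) > 0"
  shows "f w = (\<Sum>l<P. contour_integral (part_circlepath c r (2*pi*l/P) (2*pi*Suc l/P))
                          (\<lambda>u. f u / (u - w)) / (2 * pi * \<i>))"
proof -
  define s where "s l = 2*pi*l/P" for l :: nat
  have mono: "s l < s (Suc l)" for l
    using \<open>P > 0\<close> by (simp add: s_def divide_strict_right_mono)
  have "r > 0"
    using \<open>w \<in> ball c r\<close> zero_le_dist[of c w] unfolding mem_ball by linarith
  have "(\<lambda>u. f u / (u - w)) contour_integrable_on part_circlepath c r (s l) (s (Suc l))" for l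
  proof (rule contour_integrable_continuous_part_circlepath)
    have sub: "path_image (part_circlepath c r (s l) (s (Suc l))) \<subseteq> sphere c r"
      using mono[of l] \<open>r > 0\<close> by (intro path_image_part_circlepath_subset) auto
    then have "continuous_on (path_image (part_circlepath c r (s l) (s (Suc l)))) f"
      using continuous_on_subset[OF assms(1)] sphere_cball by blast
    moreover have "w \<notin> sphere c r"
      using \<open>w \<in> ball c r\<close> by simp
    ultimately show "continuous_on (path_image (part_circlepath c r (s l) (s (Suc l)))) (\<lambda>u. f u / (u - w))"
      using sub by (intro continuous_intros) auto
  qed
  then have "((\<lambda>u. f u / (u - w)) has_contour_integral
               (\<Sum>l<Suc (P - 1). contour_integral (part_circlepath c r (s l) (s (Suc l))) (\<lambda>u. f u / (u - w))))
             (part_circlepath c r (s 0) (s (Suc (P - 1))))"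
    by (intro has_contour_integral_part_circlepath_sum mono)
  then have "((\<lambda>u. f u / (u - w)) has_contour_integral
               (\<Sum>l<P. contour_integral (part_circlepath c r (s l) (s (Suc l))) (\<lambda>u. f u / (u - w))))
             (circlepath c r)"
    using \<open>P > 0\<close> by (simp add: s_def circlepath_def)
  moreover have "((\<lambda>u. f u / (u - w)) has_contour_integral (2 * of_real pi * \<i> * f w)) (circlepath c r)"
    using assms(1-3) by (intro Cauchy_integral_circlepath) (auto simp: dist_norm norm_minus_commute)
  ultimately have "2 * of_real pi * \<i> * f w =
      (\<Sum>l<P. contour_integral (part_circlepath c r (s l) (s (Suc l))) (\<lambda>u. f u / (u - w)))"
    using has_contour_integral_unique by blast
  then show ?thesis
    by (simp add: s_def sum_divide_distrib[symmetric] field_simps)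
qed

lemma multi_power_series_at_1_from_circle:
  fixes G :: "complex \<Rightarrow> complex" and \<sigma> :: "nat \<Rightarrow> real"
  assumes contG: "continuous_on (cball c r) G" and holG: "G holomorphic_on ball c r" and "0 < r"
    and V: "V \<subseteq> ball c r"
    and Es: "0 \<notin> Es" "\<And>e. e \<in> Es \<Longrightarrow> 0 \<le> \<sigma> e"
    and near_1: "\<And>z. z \<in> V \<Longrightarrow> norm (z - 1) \<le> 1"
    and near_e: "\<And>z e. z \<in> V \<Longrightarrow> e \<in> Es \<Longrightarrow> norm (z ^ e - 1) \<le> \<sigma> e"
    and cover: "sphere c r \<subseteq> (\<Union>e\<in>Es. {t. \<sigma> e < norm (t ^ e - 1)})"
  shows "multi_power_series_at_1 V G"
proof -
  have open_far: "open {t::complex. \<sigma> e < norm (t ^ e - 1)}" for e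
    by (intro open_Collect_less continuous_intros)
  obtain P el where "(P::nat) > 0" and el: "\<And>l. l < P \<Longrightarrow> el l \<in> Es \<and>
      path_image (part_circlepath c r (2*pi*l/P) (2*pi*Suc l/P)) \<subseteq> {t. \<sigma> (el l) < norm (t ^ el l - 1)}"
    by (rule circlepath_partition_subordinate[OF _ cover \<open>0 < r\<close>]) (use open_far in blast)+
  define arc where "arc l = part_circlepath c r (2*pi*l/P) (2*pi*Suc l/P)" for l
  define h where "h l z = contour_integral (arc l) (\<lambda>t. G t / (t - z)) / (2 * pi * \<i>)" for l z
  have "double_power_series_on V (el l) (\<lambda>i n. cauchy_coeff (arc l) G (el l) i n / (2 * pi * \<i>)) (h l)"
    if l: "l < P" for l
  proof -
    have "path_image (arc l) \<subseteq> sphere c r"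
      unfolding arc_def using \<open>P > 0\<close> \<open>0 < r\<close>
      by (intro path_image_part_circlepath_subset) (auto simp: divide_right_mono)
    then have "continuous_on (path_image (arc l)) G"
      using continuous_on_subset[OF contG] sphere_cball by blast
    then show ?thesis
      unfolding h_def arc_def using \<open>P > 0\<close> \<open>0 < r\<close> Es el[OF l] near_1 near_e
      by (intro double_power_series_on_divide double_power_series_on_part_circlepath[where \<sigma>="\<sigma> (el l)"])
         (auto simp: arc_def divide_right_mono)
  qed
  moreover have "0 < el l" if "l < P" for l
    using el[OF that] Es(1) by (metis gr0I)
  ultimately have "multi_power_series_at_1 V (\<lambda>z. \<Sum>l<P. h l z)"
    using \<open>P > 0\<close> by (intro multi_power_series_at_1_block_sum)
  moreover have "G z = (\<Sum>l<P. h l z)" if "z \<in> V" for z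
    unfolding h_def arc_def using contG holG V that \<open>P > 0\<close>
    by (intro Cauchy_integral_circlepath_sum_arcs) auto
  ultimately show ?thesis
    using multi_power_series_at_1_cong[of V G "\<lambda>z. \<Sum>l<P. h l z"] by simp
qed

section \<open>Geometry of \<open>Omega_m\<close>\<close>

lemma norm_minus_1_squared: "norm (w - 1) ^ 2 = norm w ^ 2 - 2 * Re w + 1"
  for w :: complex
  by (simp only: cmod_power2) (simp add: power2_eq_square algebra_simps)

lemma Re_power_eq: "Re (t ^ e) = norm t ^ e * cos (real e * Arg t)"
  by (metis DeMoivre2 rcis_cmod_Arg Re_rcis)

lemma one_lt_norm_minus_1: "Re w < 0 \<Longrightarrow> 1 < norm (w - 1)"
  for w :: complex
  using abs_Re_le_cmod[of "w - 1"] by simp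

lemma Omega_mD:
  assumes "z \<in> Omega_m m"
  shows "z \<noteq> 0" "norm z < 2 powr (1 / real m)" "\<bar>Arg z\<bar> < pi / (2 * real m)"
  using assms unfolding Omega_m_def by auto

lemma Re_pos_of_Omega_m:
  assumes "m \<ge> 1" "z \<in> Omega_m m"
  shows "0 < Re z"
proof -
  have "pi / (2 * real m) \<le> pi / 2"
    using assms(1) by (simp add: field_simps)
  then show ?thesis
    using Omega_mD[OF assms(2)] Arg_Re_pos[of z] by linarith
qed

lemma norm_power_m_minus_1_le_3_of_Omega_m:
  assumes "m \<ge> 1" "z \<in> Omega_m m"
  shows "norm (z ^ m - 1) \<le> 3"
proof -
  have "norm z ^ m < (2 powr (1 / real m)) ^ m"
    using Omega_mD[OF assms(2)] assms(1) by (intro power_strict_mono) auto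
  also have "\<dots> = 2"
    using assms(1) by (simp add: powr_realpow[symmetric] powr_powr)
  finally show ?thesis
    using norm_triangle_ineq4[of "z ^ m" 1] by (simp add: norm_power)
qed

lemma norm_power_minus_1_lt_1_of_Omega_m:
  assumes z: "z \<in> Omega_m m" and e: "1 \<le> e" "2 * e \<le> m"
  shows "norm (z ^ e - 1) < 1"
proof -
  define r where "r = norm z ^ e"
  have "r > 0"
    using Omega_mD(1)[OF z] by (simp add: r_def)
  have "r < (2 powr (1 / real m)) ^ e"
    unfolding r_def using Omega_mD[OF z] e by (intro power_strict_mono) auto
  also have "\<dots> = 2 powr (e / m)"
    by (simp add: powr_realpow[symmetric] powr_powr)
  also have "\<dots> \<le> 2 powr (1 / 2)"
    using e by (intro powr_mono) (auto simp: field_simps)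
  finally have r: "r < sqrt 2"
    by (simp add: powr_half_sqrt)
  have "\<bar>e * Arg z\<bar> = e * \<bar>Arg z\<bar>"
    by (simp add: abs_mult)
  also have "\<dots> \<le> e * (pi / (2 * real m))"
    using Omega_mD(3)[OF z] by (intro mult_left_mono) auto
  also have "\<dots> \<le> pi / 4"
    using e pi_gt_zero by (simp add: field_simps)
  finally have "cos (pi / 4) \<le> cos \<bar>e * Arg z\<bar>"
    by (intro cos_monotone_0_pi_le) auto
  then have cos: "sqrt 2 / 2 \<le> cos (e * Arg z)"
    by (simp add: cos_45)
  have "norm (z ^ e - 1) ^ 2 = r ^ 2 - 2 * (r * cos (e * Arg z)) + 1"
    unfolding norm_minus_1_squared Re_power_eq r_def by (simp add: norm_power)
  also have "\<dots> < 1"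
    using mult_left_mono[OF cos, of r] \<open>r > 0\<close> r by (simp add: power2_eq_square)
  finally show ?thesis
    by (simp add: power_less_one_iff)
qed

lemma abs_Im_lt_of_Omega_m:
  assumes "m \<ge> 1" "z \<in> Omega_m m" "pi / (2 * real m) \<le> arctan \<tau>"
  shows "\<bar>Im z\<bar> < \<tau> * Re z"
proof -
  have Re: "0 < Re z"
    by (rule Re_pos_of_Omega_m[OF assms(1,2)])
  have "arctan \<bar>Im z / Re z\<bar> = \<bar>Arg z\<bar>"
    using arg_conv_arctan[OF Re] by (simp add: abs_arctan)
  then have "arctan \<bar>Im z / Re z\<bar> < arctan \<tau>"
    using Omega_mD(3)[OF assms(2)] assms(3) by linarith
  then have "\<bar>Im z\<bar> / Re z < \<tau>"
    using Re by (simp add: arctan_less_iff abs_divide)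
  then show ?thesis
    using Re by (simp add: divide_less_eq)
qed

lemma multiple_in_second_quadrant:
  assumes "0 < \<psi>" "\<psi> \<le> pi"
  shows "pi / 2 < real (nat \<lfloor>pi / (2 * \<psi>)\<rfloor> + 1) * \<psi>" "real (nat \<lfloor>pi / (2 * \<psi>)\<rfloor> + 1) * \<psi> \<le> pi"
proof -
  define e where "e = nat \<lfloor>pi / (2 * \<psi>)\<rfloor> + 1"
  have e: "real e = of_int \<lfloor>pi / (2 * \<psi>)\<rfloor> + 1"
    using assms by (simp add: e_def)
  have "pi / (2 * \<psi>) < e"
    unfolding e by linarith
  then show "pi / 2 < real (nat \<lfloor>pi / (2 * \<psi>)\<rfloor> + 1) * \<psi>"
    using assms by (simp add: e_def field_simps)
  show "real (nat \<lfloor>pi / (2 * \<psi>)\<rfloor> + 1) * \<psi> \<le> pi"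
  proof (cases "\<psi> \<le> pi / 2")
    case True
    have "e \<le> pi / (2 * \<psi>) + 1"
      unfolding e by linarith
    then have "e * \<psi> \<le> (pi / (2 * \<psi>) + 1) * \<psi>"
      using assms by (intro mult_right_mono) auto
    also have "\<dots> = pi / 2 + \<psi>"
      using assms by (simp add: field_simps)
    finally show ?thesis
      using True by (simp add: e_def)
  next
    case False
    then have "\<lfloor>pi / (2 * \<psi>)\<rfloor> = 0"
      using assms by (simp add: floor_eq_iff field_simps)
    then show ?thesis
      using assms by simp
  qed
qed

lemma exists_power_far_from_1:
  fixes t :: complex
  assumes "t \<noteq> 0" "\<beta> \<le> \<bar>Arg t\<bar>" "0 < \<beta>"
  shows "\<exists>e. 1 \<le> e \<and> e \<le> nat \<lceil>pi / (2 * \<beta>)\<rceil> + 1 \<and> 1 < norm (t ^ e - 1)"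
proof -
  define \<psi> where "\<psi> = \<bar>Arg t\<bar>"
  have "0 < \<psi>" "\<psi> \<le> pi"
    using assms Arg_bounded[of t] by (auto simp: \<psi>_def)
  define e where "e = nat \<lfloor>pi / (2 * \<psi>)\<rfloor> + 1"
  have "cos (e * \<psi>) < 0"
    using multiple_in_second_quadrant[OF \<open>0 < \<psi>\<close> \<open>\<psi> \<le> pi\<close>] cos_gt_zero_pi[of "e * \<psi> - pi"]
    by (simp add: e_def cos_diff)
  moreover have "cos (e * Arg t) = cos (e * \<psi>)"
    unfolding \<psi>_def by (cases "Arg t \<ge> 0") auto
  ultimately have "1 < norm (t ^ e - 1)"
    using \<open>t \<noteq> 0\<close> by (intro one_lt_norm_minus_1) (simp add: Re_power_eq mult_pos_neg)
  moreover have "\<lfloor>pi / (2 * \<psi>)\<rfloor> \<le> \<lceil>pi / (2 * \<beta>)\<rceil>"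
  proof -
    have "pi / (2 * \<psi>) \<le> pi / (2 * \<beta>)"
      using assms \<open>0 < \<psi>\<close> unfolding \<psi>_def by (intro divide_left_mono) auto
    then show ?thesis
      by (meson floor_le_ceiling floor_mono order_trans)
  qed
  ultimately show ?thesis
    by (intro exI[of _ e]) (auto simp: e_def)
qed

lemma open_Omega_m:
  assumes "m \<ge> 1"
  shows "open (Omega_m m)"
proof -
  have "open {z::complex. 0 < Re z}"
    by (intro open_Collect_less continuous_intros)
  moreover have "continuous_on {z. 0 < Re z} (\<lambda>z. \<bar>Arg z\<bar>)"
    by (intro continuous_on_rabs continuous_at_imp_continuous_on ballI continuous_at_Arg)
       (auto simp: complex_nonpos_Reals_iff)
  ultimately have "open ((\<lambda>z. \<bar>Arg z\<bar>) -` {..<pi / (2 * real m)} \<inter> {z. 0 < Re z})"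
    by (simp add: continuous_on_open_vimage)
  moreover have "open {z :: complex. norm z < 2 powr (1 / real m)}"
    by (intro open_Collect_less continuous_intros)
  moreover have "Omega_m m =
      ((\<lambda>z. \<bar>Arg z\<bar>) -` {..<pi / (2 * real m)} \<inter> {z. 0 < Re z}) \<inter> {z. norm z < 2 powr (1 / real m)}"
    using Re_pos_of_Omega_m[OF assms] by (auto simp: Omega_m_def)
  ultimately show ?thesis
    by (simp add: open_Int)
qed

lemma of_real_in_Omega_m:
  assumes "m \<ge> 1" "0 < x" "x \<le> 1"
  shows "complex_of_real x \<in> Omega_m m"
proof -
  have "1 < 2 powr (1 / real m)"
    using assms by (intro gr_one_powr) auto
  then have "x < 2 powr (1 / real m)"
    using assms by linarith
  then show ?thesis
    using assms by (simp add: Omega_m_def)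
qed

lemma half_disc_inequality:
  fixes b X x :: real
  assumes "0 < b" "b \<le> 1" "1 \<le> X" "X \<le> 1 + b / 2" "0 \<le> x" "x \<le> X"
  shows "(x - 1 / 2) ^ 2 + b / 16 * x ^ 2 \<le> (1 / 2 + b) ^ 2"
proof -
  have expand: "(x - 1 / 2) ^ 2 = x ^ 2 - x + 1 / 4" "(1 / 2 + b) ^ 2 = 1 / 4 + b + b ^ 2"
    by (simp_all add: power2_eq_square algebra_simps)
  show ?thesis
  proof (cases "x \<le> 1")
    case True
    have "b / 16 * x ^ 2 \<le> b / 16"
      using True assms by (intro mult_left_le) (auto simp: power_le_one)
    moreover have "x ^ 2 \<le> x"
      using True assms mult_left_le[of x x] by (simp add: power2_eq_square)
    ultimately show ?thesis
      using assms expand zero_le_power2[of b] by linarith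
  next
    case False
    have "x ^ 2 \<le> (3 / 2) ^ 2"
      using assms False by (intro power_mono) auto
    then have "b / 16 * x ^ 2 \<le> b / 16 * (9 / 4)"
      using assms by (intro mult_left_mono) (auto simp: power2_eq_square)
    moreover have "x * (x - 1) \<le> (1 + b / 2) * (b / 2)"
      using False assms by (intro mult_mono) auto
    moreover have "x * (x - 1) = x ^ 2 - x" "(1 + b / 2) * (b / 2) = b / 2 + b ^ 2 / 4"
      by (simp_all add: power2_eq_square algebra_simps)
    ultimately show ?thesis
      using assms expand zero_le_power2[of b] by linarith
  qed
qed

lemma norm_minus_half_squared: "norm (p - 1 / 2) ^ 2 = (Re p - 1 / 2) ^ 2 + (Im p) ^ 2"
  by (simp add: cmod_power2)

lemma cball_half_subset:
  fixes b d :: real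
  assumes "0 < b" "b \<le> 1" "8 * b \<le> d ^ 2" "0 < d"
  shows "cball (1 / 2 :: complex) (1 / 2 + b) \<subseteq> ball 0 1 \<union> ball 1 d"
proof
  fix p :: complex
  assume p: "p \<in> cball (1 / 2) (1 / 2 + b)"
  show "p \<in> ball 0 1 \<union> ball 1 d"
  proof (cases "norm p < 1")
    case False
    have "norm (p - 1 / 2) ^ 2 \<le> (1 / 2 + b) ^ 2"
      using p by (intro power_mono) (auto simp: dist_norm norm_minus_commute)
    then have "(Re p) ^ 2 + (Im p) ^ 2 \<le> Re p + b + b ^ 2"
      unfolding norm_minus_half_squared by (simp add: power2_eq_square algebra_simps)
    moreover have "1 \<le> (Re p) ^ 2 + (Im p) ^ 2"
      using False by (simp add: cmod_power2[symmetric] one_le_power)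
    moreover have "b ^ 2 \<le> b"
      using assms by (simp add: power2_eq_square mult_le_cancel_left1)
    moreover have "norm (p - 1) ^ 2 = (Re p) ^ 2 + (Im p) ^ 2 - 2 * Re p + 1"
      using norm_minus_1_squared[of p] by (simp add: cmod_power2)
    ultimately have "norm (p - 1) ^ 2 < d ^ 2"
      using assms by linarith
    then have "norm (p - 1) < d"
      using \<open>0 < d\<close> by (simp add: power_less_imp_less_base)
    then show ?thesis
      by (simp add: dist_norm norm_minus_commute)
  qed simp
qed

lemma Omega_m_subset_ball_half:
  assumes "m \<ge> 1" "pi / (2 * real m) \<le> arctan \<tau>" "2 powr (1 / real m) \<le> X"
    and disc: "\<And>x. 0 \<le> x \<Longrightarrow> x \<le> X \<Longrightarrow> (x - 1 / 2) ^ 2 + \<tau> ^ 2 * x ^ 2 \<le> \<rho> ^ 2" and "0 < \<rho>"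
  shows "Omega_m m \<subseteq> ball (1 / 2) \<rho>"
proof
  fix z assume z: "z \<in> Omega_m m"
  have Re: "0 < Re z"
    by (rule Re_pos_of_Omega_m[OF assms(1) z])
  have "Re z \<le> X"
    using complex_Re_le_cmod[of z] Omega_mD(2)[OF z] assms(3) by linarith
  moreover have "\<bar>Im z\<bar> < \<tau> * Re z"
    by (rule abs_Im_lt_of_Omega_m[OF assms(1) z assms(2)])
  then have "(Im z) ^ 2 < (\<tau> * Re z) ^ 2"
    by (metis abs_ge_zero power2_abs power_strict_mono zero_less_numeral)
  ultimately have "norm (z - 1 / 2) ^ 2 < \<rho> ^ 2"
    using disc[of "Re z"] Re by (simp add: cmod_power2 power_mult_distrib)
  then show "z \<in> ball (1 / 2) \<rho>"
    using \<open>0 < \<rho>\<close> by (simp add: dist_norm norm_minus_commute power_less_imp_less_base)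
qed

lemma sphere_half_power_far_from_1:
  fixes t :: complex
  assumes "0 < \<tau>" "1 / 2 < \<rho>" "0 \<le> X" "4 \<le> X ^ m"
    and disc: "\<And>x. 0 \<le> x \<Longrightarrow> x \<le> X \<Longrightarrow> (x - 1 / 2) ^ 2 + \<tau> ^ 2 * x ^ 2 \<le> \<rho> ^ 2"
    and t: "dist (1 / 2) t = \<rho>"
  shows "3 < norm (t ^ m - 1) \<or>
         (\<exists>e. 1 \<le> e \<and> e \<le> nat \<lceil>pi / (2 * arctan \<tau>)\<rceil> + 1 \<and> 1 < norm (t ^ e - 1))"
proof (cases "X < Re t")
  case True
  have "m \<noteq> 0"
    using assms(4) by (intro notI) simp
  with True have "X ^ m < norm t ^ m"
    using complex_Re_le_cmod[of t] assms(3) by (intro power_strict_mono) auto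
  then have "4 < norm (t ^ m)"
    using assms(4) by (simp add: norm_power)
  then show ?thesis
    using norm_triangle_ineq2[of "t ^ m" 1] by simp
next
  case False
  have circle: "(Re t - 1 / 2) ^ 2 + (Im t) ^ 2 = \<rho> ^ 2"
    using t norm_minus_half_squared[of t] by (simp add: dist_norm norm_minus_commute)
  have "t \<noteq> 0"
    using t \<open>1 / 2 < \<rho>\<close> by auto
  have "arctan \<tau> \<le> \<bar>Arg t\<bar>"
  proof (cases "0 < Re t")
    case True
    have "(\<tau> * Re t) ^ 2 \<le> \<bar>Im t\<bar> ^ 2"
      using disc[of "Re t"] True False circle by (simp add: power_mult_distrib)
    then have "\<tau> * Re t \<le> \<bar>Im t\<bar>"
      by (rule power2_le_imp_le) simp
    then have "\<tau> \<le> \<bar>Im t / Re t\<bar>"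
      using True by (simp add: abs_divide field_simps)
    then have "arctan \<tau> \<le> arctan \<bar>Im t / Re t\<bar>"
      by (simp add: arctan_le_iff)
    also have "\<dots> = \<bar>Arg t\<bar>"
      using arg_conv_arctan[OF True] by (simp add: abs_arctan)
    finally show ?thesis .
  next
    case False
    then have "pi / 2 \<le> \<bar>Arg t\<bar>"
      using Arg_Re_pos[of t] \<open>t \<noteq> 0\<close> by linarith
    then show ?thesis
      using arctan_ubound[of \<tau>] by linarith
  qed
  then show ?thesis
    using exists_power_far_from_1[OF \<open>t \<noteq> 0\<close>] \<open>0 < \<tau>\<close> by (simp add: zero_less_arctan_iff)
qed

lemma root_of_4_bounds:
  fixes b :: real
  assumes "0 < b" "m \<ge> 1" "6 / b \<le> m"
  defines "X \<equiv> 4 powr (1 / real m)"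
  shows "1 \<le> X" "X ^ m = 4" "2 powr (1 / real m) \<le> X" "X \<le> 1 + b / 2"
proof -
  show "1 \<le> X" "X ^ m = 4" "2 powr (1 / real m) \<le> X"
    using assms by (auto simp: X_def powr_realpow[symmetric] powr_powr intro: powr_mono2 ge_one_powr_ge_zero)
  have "1 + m * (b / 2) \<le> (1 + b / 2) ^ m"
    using assms by (intro Bernoulli_inequality) auto
  moreover have "3 \<le> m * (b / 2)"
    using assms by (simp add: field_simps)
  ultimately have "X \<le> ((1 + b / 2) ^ m) powr (1 / real m)"
    unfolding X_def by (intro powr_mono2) auto
  also have "\<dots> = 1 + b / 2"
    using assms by (simp add: powr_realpow[symmetric] powr_powr)
  finally show "X \<le> 1 + b / 2" .
qed

lemma Omega_m_exponent_cover:
  fixes d :: real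
  assumes "0 < d" "d \<le> 1"
  obtains m \<rho> Es \<sigma> where "m \<ge> 1" "0 < \<rho>" "cball (1 / 2 :: complex) \<rho> \<subseteq> ball 0 1 \<union> ball 1 d"
    "Omega_m m \<subseteq> ball (1 / 2) \<rho>" "0 \<notin> Es" "\<And>e. e \<in> Es \<Longrightarrow> 0 \<le> \<sigma> e"
    "\<And>z. z \<in> Omega_m m \<Longrightarrow> norm (z - 1) \<le> 1"
    "\<And>z e. z \<in> Omega_m m \<Longrightarrow> e \<in> Es \<Longrightarrow> norm (z ^ e - 1) \<le> \<sigma> e"
    "sphere (1 / 2 :: complex) \<rho> \<subseteq> (\<Union>e\<in>Es. {t. \<sigma> e < norm (t ^ e - 1)})"
proof -
  define b where "b = d ^ 2 / 8"
  have "0 < b" "b \<le> 1"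
    using assms power_le_one[of d 2] by (auto simp: b_def)
  define \<tau> where "\<tau> = sqrt b / 4"
  have "0 < \<tau>" "\<tau> ^ 2 = b / 16"
    using \<open>0 < b\<close> by (simp_all add: \<tau>_def power_divide)
  define E where "E = nat \<lceil>pi / (2 * arctan \<tau>)\<rceil> + 1"
  define m where "m = 4 * E + nat \<lceil>6 / b\<rceil> + 1"
  have "m \<ge> 1" "2 * E \<le> m"
    by (simp_all add: m_def)
  have "pi / (2 * arctan \<tau>) \<le> m"
    using real_nat_ceiling_ge[of "pi / (2 * arctan \<tau>)"] by (simp add: m_def E_def)
  then have "pi / (2 * real m) \<le> arctan \<tau>"
    using \<open>0 < \<tau>\<close> \<open>m \<ge> 1\<close> by (simp add: field_simps zero_less_arctan_iff)
  have "6 / b \<le> m"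
    using real_nat_ceiling_ge[of "6 / b"] by (simp add: m_def)
  \<comment> \<open>\<open>X\<close> bounds the real parts occurring in \<open>Omega_m m\<close>; beyond it \<open>t ^ m\<close> is far from \<open>1\<close>\<close>
  define X where "X = 4 powr (1 / real m)"
  have "1 \<le> X" "X ^ m = 4" "2 powr (1 / real m) \<le> X" "X \<le> 1 + b / 2"
    unfolding X_def using \<open>0 < b\<close> \<open>m \<ge> 1\<close> \<open>6 / b \<le> m\<close> by (rule root_of_4_bounds)+
  define \<rho> where "\<rho> = 1 / 2 + b"
  have disc: "(x - 1 / 2) ^ 2 + \<tau> ^ 2 * x ^ 2 \<le> \<rho> ^ 2" if "0 \<le> x" "x \<le> X" for x
    unfolding \<rho>_def \<open>\<tau> ^ 2 = b / 16\<close>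
    using \<open>0 < b\<close> \<open>b \<le> 1\<close> \<open>1 \<le> X\<close> \<open>X \<le> 1 + b / 2\<close> that by (rule half_disc_inequality)
  \<comment> \<open>exponents in \<open>{1..E}\<close> detect circle points of large argument, \<open>m\<close> those of large real part\<close>
  define Es where "Es = {1..E} \<union> {m}"
  define \<sigma> :: "nat \<Rightarrow> real" where "\<sigma> e = (if e = m then 3 else 1)" for e
  show ?thesis
  proof (rule that)
    show "cball (1 / 2 :: complex) \<rho> \<subseteq> ball 0 1 \<union> ball 1 d"
      unfolding \<rho>_def using \<open>0 < b\<close> \<open>b \<le> 1\<close> \<open>0 < d\<close> by (intro cball_half_subset) (auto simp: b_def)
    show "Omega_m m \<subseteq> ball (1 / 2) \<rho>"
      using \<open>m \<ge> 1\<close> \<open>pi / (2 * real m) \<le> arctan \<tau>\<close> \<open>2 powr (1 / real m) \<le> X\<close> disc \<open>0 < b\<close>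
      by (intro Omega_m_subset_ball_half) (auto simp: \<rho>_def)
    show "norm (z - 1) \<le> 1" if "z \<in> Omega_m m" for z
      using norm_power_minus_1_lt_1_of_Omega_m[OF that, of 1] \<open>2 * E \<le> m\<close> by (simp add: E_def)
    show "norm (z ^ e - 1) \<le> \<sigma> e" if "z \<in> Omega_m m" "e \<in> Es" for z e
      using that norm_power_m_minus_1_le_3_of_Omega_m[OF \<open>m \<ge> 1\<close>] \<open>2 * E \<le> m\<close>
        norm_power_minus_1_lt_1_of_Omega_m[of z m e]
      by (auto simp: Es_def \<sigma>_def)
    show "sphere (1 / 2 :: complex) \<rho> \<subseteq> (\<Union>e\<in>Es. {t. \<sigma> e < norm (t ^ e - 1)})"
    proof
      fix t :: complex assume "t \<in> sphere (1 / 2) \<rho>"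
      then have "3 < norm (t ^ m - 1) \<or> (\<exists>e. 1 \<le> e \<and> e \<le> E \<and> 1 < norm (t ^ e - 1))"
        unfolding E_def using \<open>0 < \<tau>\<close> \<open>0 < b\<close> \<open>1 \<le> X\<close> \<open>X ^ m = 4\<close> disc
        by (intro sphere_half_power_far_from_1[where X=X]) (auto simp: \<rho>_def)
      moreover have "E < m"
        using \<open>2 * E \<le> m\<close> by (simp add: E_def)
      ultimately show "t \<in> (\<Union>e\<in>Es. {t. \<sigma> e < norm (t ^ e - 1)})"
        by (auto simp: Es_def \<sigma>_def)
    qed
  qed (use \<open>m \<ge> 1\<close> \<open>0 < b\<close> in \<open>auto simp: \<rho>_def Es_def \<sigma>_def\<close>)
qed

section \<open>Removing the pole at \<open>1\<close>\<close>

lemma pole_of_order_obtain_holomorphic: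
  assumes "pole_of_order f p \<nu>"
  obtains r g where "0 < r" "g holomorphic_on ball p r"
    "\<And>z. z \<in> ball p r - {p} \<Longrightarrow> g z = (z - p) ^ \<nu> * f z"
proof (cases "\<nu> = 0")
  case True
  then show ?thesis
    using assms that[of _ f] by (auto simp: pole_of_order_def)
next
  case False
  then obtain r g where "0 < r" "g holomorphic_on ball p r"
    and "\<forall>z\<in>ball p r - {p}. f z = g z / (z - p) ^ \<nu>"
    using assms by (auto simp: pole_of_order_def)
  then show ?thesis
    using that[of r g] by simp
qed

lemma holomorphic_on_punctured_ball:
  assumes "f holomorphic_on U - S" "finite S" "open U" "p \<in> U"
  obtains \<delta> where "0 < \<delta>" "f holomorphic_on ball p \<delta> - {p}"
proof -
  obtain \<epsilon> where "0 < \<epsilon>" "ball p \<epsilon> \<subseteq> U"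
    using \<open>open U\<close> \<open>p \<in> U\<close> openE by blast
  obtain \<delta> where "0 < \<delta>" and \<delta>: "\<And>q. q \<in> S \<Longrightarrow> q \<noteq> p \<Longrightarrow> \<delta> \<le> dist p q"
    using finite_set_avoid[OF \<open>finite S\<close>, of p] by blast
  have "ball p (min \<epsilon> \<delta>) - {p} \<subseteq> U - S"
  proof
    fix z assume z: "z \<in> ball p (min \<epsilon> \<delta>) - {p}"
    then have "z \<notin> S"
      using \<delta>[of z] by auto
    with z \<open>ball p \<epsilon> \<subseteq> U\<close> show "z \<in> U - S"
      by auto
  qed
  then have "f holomorphic_on ball p (min \<epsilon> \<delta>) - {p}"
    using assms(1) by (rule holomorphic_on_subset[rotated])
  moreover have "0 < min \<epsilon> \<delta>"
    using \<open>0 < \<epsilon>\<close> \<open>0 < \<delta>\<close> by simp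
  ultimately show ?thesis
    using that by blast
qed

lemma holomorphic_pole_multiple_on_lens:
  assumes "finite_ML_type \<alpha> (ball 0 1 \<union> ball 1 1)" "\<alpha> holomorphic_on ball 0 1" "pole_of_order \<alpha> 1 \<nu>"
  obtains d G where "0 < d" "d \<le> 1" "\<alpha> holomorphic_on ball 1 d - {1}"
    "G holomorphic_on ball 0 1 \<union> ball 1 d"
    "\<And>z. z \<in> ball 0 1 \<union> ball 1 d - {1} \<Longrightarrow> G z = (z - 1) ^ \<nu> * \<alpha> z"
proof -
  obtain S where "\<alpha> holomorphic_on (ball 0 1 \<union> ball 1 1) - S" "finite S"
    using assms(1) by (auto simp: finite_ML_type_def)
  then obtain \<delta> where "0 < \<delta>" and hol_\<delta>: "\<alpha> holomorphic_on ball 1 \<delta> - {1}"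
    by (rule holomorphic_on_punctured_ball) auto
  obtain r g where "0 < r" and g: "g holomorphic_on ball 1 r"
    and g_eq: "\<And>z. z \<in> ball 1 r - {1} \<Longrightarrow> g z = (z - 1) ^ \<nu> * \<alpha> z"
    using pole_of_order_obtain_holomorphic[OF assms(3)] by blast
  define d where "d = min 1 (min \<delta> r)"
  have "0 < d" "d \<le> 1" "d \<le> \<delta>" "d \<le> r"
    using \<open>0 < \<delta>\<close> \<open>0 < r\<close> by (auto simp: d_def)
  have hol_punctured: "\<alpha> holomorphic_on ball 1 d - {1}"
    using hol_\<delta> by (rule holomorphic_on_subset) (use \<open>d \<le> \<delta>\<close> in auto)
  define G where "G z = (if z \<in> ball 1 d then g z else (z - 1) ^ \<nu> * \<alpha> z)" for z
  have G_eq: "G z = (z - 1) ^ \<nu> * \<alpha> z" if "z \<in> ball 0 1 \<union> ball 1 d - {1}" for z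
  proof (cases "z \<in> ball 1 d")
    case True
    then have "z \<in> ball 1 r - {1}"
      using that \<open>d \<le> r\<close> by auto
    with True show ?thesis
      by (simp add: G_def g_eq)
  qed (simp add: G_def)
  have "G holomorphic_on ball 0 1"
  proof (rule holomorphic_transform[of "\<lambda>z. (z - 1) ^ \<nu> * \<alpha> z"])
    show "(\<lambda>z. (z - 1) ^ \<nu> * \<alpha> z) holomorphic_on ball 0 1"
      using assms(2) by (intro holomorphic_intros)
    show "(z - 1) ^ \<nu> * \<alpha> z = G z" if "z \<in> ball 0 1" for z
    proof -
      have "z \<noteq> 1"
        using that by auto
      with that show ?thesis
        using G_eq[of z] by simp
    qed
  qed
  moreover have "G holomorphic_on ball 1 d"
  proof (rule holomorphic_transform[of g])
    show "g holomorphic_on ball 1 d"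
      using g by (rule holomorphic_on_subset) (use \<open>d \<le> r\<close> in auto)
  qed (simp add: G_def)
  ultimately have "G holomorphic_on ball 0 1 \<union> ball 1 d"
    by (intro holomorphic_on_Un) auto
  from \<open>0 < d\<close> \<open>d \<le> 1\<close> hol_punctured this G_eq show ?thesis
    by (rule that)
qed

section \<open>Expansion on \<open>Omega_m\<close> and tameness\<close>

lemma Omega_m_multi_power_series:
  assumes "0 < d" "d \<le> 1" "G holomorphic_on ball 0 1 \<union> ball 1 d"
  obtains m where "m \<ge> 1" "Omega_m m \<subseteq> ball 0 1 \<union> ball 1 d" "multi_power_series_at_1 (Omega_m m) G"
proof -
  obtain m \<rho> Es \<sigma> where "m \<ge> 1" "0 < \<rho>" and disc: "cball (1 / 2 :: complex) \<rho> \<subseteq> ball 0 1 \<union> ball 1 d"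
    and "Omega_m m \<subseteq> ball (1 / 2) \<rho>" "0 \<notin> Es" "\<And>e. e \<in> Es \<Longrightarrow> 0 \<le> \<sigma> e"
    "\<And>z. z \<in> Omega_m m \<Longrightarrow> norm (z - 1) \<le> 1"
    "\<And>z e. z \<in> Omega_m m \<Longrightarrow> e \<in> Es \<Longrightarrow> norm (z ^ e - 1) \<le> \<sigma> e"
    "sphere (1 / 2 :: complex) \<rho> \<subseteq> (\<Union>e\<in>Es. {t. \<sigma> e < norm (t ^ e - 1)})"
    using Omega_m_exponent_cover[OF assms(1,2)] by blast
  moreover have "G holomorphic_on cball (1 / 2) \<rho>"
    using assms(3) disc by (rule holomorphic_on_subset)
  then have "continuous_on (cball (1 / 2) \<rho>) G" "G holomorphic_on ball (1 / 2) \<rho>"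
    by (auto intro: holomorphic_on_imp_continuous_on holomorphic_on_subset[OF _ ball_subset_cball])
  ultimately have "multi_power_series_at_1 (Omega_m m) G"
    by (intro multi_power_series_at_1_from_circle[where c="1 / 2" and r=\<rho> and Es=Es and \<sigma>=\<sigma>])
  moreover have "Omega_m m \<subseteq> ball 0 1 \<union> ball 1 d"
    using \<open>Omega_m m \<subseteq> ball (1 / 2) \<rho>\<close> disc ball_subset_cball by blast
  ultimately show ?thesis
    using that \<open>m \<ge> 1\<close> by blast
qed

lemma tameI:
  assumes "\<alpha> holomorphic_on ball 0 1" and "0 < r" "\<alpha> holomorphic_on ball 1 r - {1}"
    and "pole_of_order \<alpha> 1 \<nu>" and "open U" "U \<subseteq> ball 0 1 \<union> ball 1 r" "of_real ` {0<..1} \<subseteq> U"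
    and "multi_power_series_at_1 U f" "\<And>z. z \<in> U - {1} \<Longrightarrow> f z = (z - 1) ^ \<nu> * \<alpha> z"
  shows "tame (\<lambda>n. (deriv ^^ n) \<alpha> 0 / fact n)"
proof -
  have taylor: "(\<lambda>n. (deriv ^^ n) \<alpha> 0 / fact n * z ^ n) sums \<alpha> z" if "z \<in> ball 0 1" for z
    using holomorphic_power_series[OF assms(1) that] by simp
  have summable: "\<forall>z\<in>ball 0 1. summable (\<lambda>n. (deriv ^^ n) \<alpha> 0 / fact n * z ^ n)"
    using taylor sums_summable by blast
  have sum: "\<forall>z\<in>ball 0 1. \<alpha> z = (\<Sum>n. (deriv ^^ n) \<alpha> 0 / fact n * z ^ n)"
    using taylor sums_unique by blast
  show ?thesis
    unfolding tame_def
    by (rule conjI[OF summable], rule exI[of _ \<alpha>], rule exI[of _ r], rule exI[of _ \<nu>],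
        intro conjI exI[of _ U] exI[of _ f]) (use assms sum in auto)
qed

theorem mainTheorem3:
  fixes \<alpha> :: "complex \<Rightarrow> complex" and \<nu> :: nat
  assumes "finite_ML_type \<alpha> (ball 0 1 \<union> ball 1 1)"
    and "\<alpha> holomorphic_on ball 0 1"
    and "pole_of_order \<alpha> 1 \<nu>"
  shows "(\<exists>m::nat. m \<ge> 1 \<and>
            (\<exists>f. multi_power_series_at_1 (Omega_m m) f \<and>
                 (\<forall>z\<in>Omega_m m - {1}. f z = (z - 1) ^ \<nu> * \<alpha> z)))
         \<and> tame (\<lambda>n. (deriv ^^ n) \<alpha> 0 / fact n)"
proof -
  obtain d G where "0 < d" "d \<le> 1" "\<alpha> holomorphic_on ball 1 d - {1}"
    and G: "G holomorphic_on ball 0 1 \<union> ball 1 d"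
    and G_eq: "\<And>z. z \<in> ball 0 1 \<union> ball 1 d - {1} \<Longrightarrow> G z = (z - 1) ^ \<nu> * \<alpha> z"
    using holomorphic_pole_multiple_on_lens[OF assms] by blast
  obtain m where "m \<ge> 1" and Omega: "Omega_m m \<subseteq> ball 0 1 \<union> ball 1 d"
    and mps: "multi_power_series_at_1 (Omega_m m) G"
    using Omega_m_multi_power_series[OF \<open>0 < d\<close> \<open>d \<le> 1\<close> G] by blast
  have G_Omega: "\<forall>z\<in>Omega_m m - {1}. G z = (z - 1) ^ \<nu> * \<alpha> z"
    using G_eq Omega by blast
  have "tame (\<lambda>n. (deriv ^^ n) \<alpha> 0 / fact n)"
    using assms(2) \<open>0 < d\<close> \<open>\<alpha> holomorphic_on ball 1 d - {1}\<close> assms(3) open_Omega_m[OF \<open>m \<ge> 1\<close>] Omega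
      of_real_in_Omega_m[OF \<open>m \<ge> 1\<close>] mps G_Omega
    by (intro tameI[where U="Omega_m m" and f=G]) auto
  with \<open>m \<ge> 1\<close> mps G_Omega show ?thesis
    by blast
qed

end
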